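(* Let $C$ be a linear code of length $n$ over $B_k$ such that $C=\overline{\Psi}_k^{-1}(C_1,\dots,C_{2^k})$ for some linear codes $C_1,\dots,C_{2^k}$ of length $n$ over $\mathbb{F}_{p^r}$. Then $d_H(C)=\min_{1\le i\le 2^k}d_H(C_i)$.
   Context: Let $p$ be a prime, $r\ge 1$, $\mathbb{F}_{p^r}$ the field with $p^r$ elements, and for $k\ge1$ let $B_k=\mathbb{F}_{p^r}[v_1,\dots,v_k]/\langle v_i^2-v_i,\ v_iv_j-v_jv_i\rangle$. A linear code over $B_k$ is a $B_k$-submodule of $B_k^n$; a linear code over $\mathbb{F}_{p^r}$ is a subspace of $\mathbb{F}_{p^r}^n$. For $H\subseteq\{1,\dots,k\}$ put $v_H=\prod_{i\in H}v_i$ ($v_\emptyset=1$); every $a\in B_k$ is uniquely $a=\sum_{H}\alpha_Hv_H$ with $\alpha_H\in\mathbb{F}_{p^r}$. Fix an enumeration $H_1,\dots,H_{2^k}$ of the subsets of $\{1,\dots,k\}$ and define $\Psi_k:B_k\to\mathbb{F}_{p^r}^{2^k}$ by $\Psi_k(a)=\big(\sum_{H\subseteq H_1}\alpha_H,\dots,\sum_{H\subseteq H_{2^k}}\alpha_H\big)$. For subsets $C_1,\dots,C_{2^k}\subseteq\mathbb{F}_{p^r}^n$, $\overline{\Psi}_k^{-1}(C_1,\dots,C_{2^k})$ is the set of $(a_1,\dots,a_n)\in B_k^n$ such that for each $j$ the vector $(\Psi_k(a_1)_j,\dots,\Psi_k(a_n)_j)$ lies in $C_j$. The Hamming weight of a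 vector over a ring is its number of nonzero coordinates, and $d_H$ of a linear code is the minimum Hamming weight of its nonzero codewords (with $d_H(\{0\})=+\infty$). *)

theory Defs
  imports Main "HOL-Computational_Algebra.Primes" "HOL-Library.Extended_Nat"
begin

text \<open>Elements of B_k = F[v_1..v_k]/(v_i^2 - v_i, v_i v_j - v_j v_i) are represented by
  their unique coordinate functions H \<mapsto> alpha_H (H \<subseteq> {1..k}), i.e. a = sum_H alpha_H v_H.\<close>

definition Bk :: "nat \<Rightarrow> (nat set \<Rightarrow> 'f::field) set" where
  "Bk k = {a. \<forall>H. \<not> H \<subseteq> {1..k} \<longrightarrow> a H = 0}"

text \<open>Ring multiplication in B_k: v_H v_G = v_(H \<union> G).\<close>
definition bmult :: "nat \<Rightarrow> (nat set \<Rightarrow> 'f::field) \<Rightarrow> (nat set \<Rightarrow> 'f) \<Rightarrow> (nat set \<Rightarrow> 'f)" where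
  "bmult k a b = (\<lambda>K. \<Sum>(H,G)\<in>{(H,G). H \<subseteq> {1..k} \<and> G \<subseteq> {1..k} \<and> H \<union> G = K}. a H * b G)"

definition Bvecs :: "nat \<Rightarrow> nat \<Rightarrow> (nat \<Rightarrow> nat set \<Rightarrow> 'f::field) set" where
  "Bvecs k n = {x. (\<forall>i. x i \<in> Bk k) \<and> (\<forall>i\<ge>n. x i = (\<lambda>_. 0))}"

definition Fvecs :: "nat \<Rightarrow> (nat \<Rightarrow> 'f::field) set" where
  "Fvecs n = {x. \<forall>i\<ge>n. x i = 0}"

definition lin_code_B :: "nat \<Rightarrow> nat \<Rightarrow> (nat \<Rightarrow> nat set \<Rightarrow> 'f::field) set \<Rightarrow> bool" where
  "lin_code_B k n C \<longleftrightarrow> C \<subseteq> Bvecs k n \<and> (\<lambda>_ _. 0) \<in> C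
     \<and> (\<forall>x\<in>C. \<forall>y\<in>C. (\<lambda>i H. x i H + y i H) \<in> C)
     \<and> (\<forall>a\<in>Bk k. \<forall>x\<in>C. (\<lambda>i. bmult k a (x i)) \<in> C)"

definition lin_code_F :: "nat \<Rightarrow> (nat \<Rightarrow> 'f::field) set \<Rightarrow> bool" where
  "lin_code_F n C \<longleftrightarrow> C \<subseteq> Fvecs n \<and> (\<lambda>_. 0) \<in> C
     \<and> (\<forall>x\<in>C. \<forall>y\<in>C. (\<lambda>i. x i + y i) \<in> C)
     \<and> (\<forall>c. \<forall>x\<in>C. (\<lambda>i. c * x i) \<in> C)"

definition psi :: "(nat \<Rightarrow> nat set) \<Rightarrow> (nat set \<Rightarrow> 'f::field) \<Rightarrow> nat \<Rightarrow> 'f" where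
  "psi Hs a j = (\<Sum>H\<in>Pow (Hs j). a H)"

definition psibar_inv :: "nat \<Rightarrow> nat \<Rightarrow> (nat \<Rightarrow> nat set) \<Rightarrow> (nat \<Rightarrow> (nat \<Rightarrow> 'f::field) set)
    \<Rightarrow> (nat \<Rightarrow> nat set \<Rightarrow> 'f) set" where
  "psibar_inv k n Hs Cs = {x \<in> Bvecs k n. \<forall>j\<in>{1..2^k}. (\<lambda>i. psi Hs (x i) j) \<in> Cs j}"

text \<open>Hamming weights and minimum distances (Inf {} = \<infinity>).\<close>
definition wtB :: "(nat \<Rightarrow> nat set \<Rightarrow> 'f::field) \<Rightarrow> nat" where
  "wtB x = card {i. x i \<noteq> (\<lambda>_. 0)}"

definition wtF :: "(nat \<Rightarrow> 'f::field) \<Rightarrow> nat" where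
  "wtF x = card {i. x i \<noteq> 0}"

definition dH_B :: "(nat \<Rightarrow> nat set \<Rightarrow> 'f::field) set \<Rightarrow> enat" where
  "dH_B C = (INF x\<in>C - {(\<lambda>_ _. 0)}. enat (wtB x))"

definition dH_F :: "(nat \<Rightarrow> 'f::field) set \<Rightarrow> enat" where
  "dH_F C = (INF x\<in>C - {(\<lambda>_. 0)}. enat (wtF x))"

end

theory Submission
  imports Defs
begin

text \<open>
  \<open>\<Psi>\<close> is the coordinate map for the primitive idempotents e_H = v_H \<Prod>_{i \<notin> H} (1 - v_i)
  of B_k, i.e. e_H = \<Sum>_{H \<subseteq> G} (-1)^|G - H| v_G (\<open>prim_idem\<close>), and \<open>\<Psi>(e_H)\<close> is the
  unit vector at H. So a codeword c of C_j lifts to e_H c \<in> C with the same support, whence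
  d(C) \<le> d(C_j). Conversely, if x \<in> C is nonzero at position i, choose H minimal with
  \<alpha>_H(x_i) \<noteq> 0; the H-component of \<open>\<Psi>(x)\<close> is then a nonzero codeword of the corresponding
  C_j whose support lies inside that of x.
\<close>

lemma sum_Pow_alternating:
  assumes "finite S" "S \<noteq> {}"
  shows "(\<Sum>T\<in>Pow S. (-1) ^ card T) = (0::'a::ring_1)"
  using assms card_subsupersets_even_odd[of S "{}"]
  by (intro sum_alternating_cancels) (auto simp: Pow_def conj_commute)

definition prim_idem :: "nat \<Rightarrow> nat set \<Rightarrow> nat set \<Rightarrow> 'a::ring_1" where
  "prim_idem k H G = (if H \<subseteq> G \<and> G \<subseteq> {1..k} then (-1) ^ card (G - H) else 0)"

lemma prim_idem_Bk: "prim_idem k H \<in> Bk k"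
  unfolding Bk_def prim_idem_def by auto

lemma prim_idem_self: "H \<subseteq> {1..k} \<Longrightarrow> prim_idem k H H = 1"
  unfolding prim_idem_def by auto

lemma sum_Pow_prim_idem:
  assumes "H' \<subseteq> {1..k}"
  shows "(\<Sum>G\<in>Pow H'. prim_idem k H G) = (if H' = H then 1 else (0::'a::ring_1))"
proof (cases "H \<subseteq> H'")
  case False
  then have "prim_idem k H G = (0::'a)" if "G \<in> Pow H'" for G
    using that unfolding prim_idem_def by auto
  then show ?thesis using False by auto
next
  case True
  have fin: "finite H'" using assms finite_subset by blast
  have "(\<Sum>G\<in>Pow H'. prim_idem k H G) = (\<Sum>G\<in>{G\<in>Pow H'. H \<subseteq> G}. (-1::'a) ^ card (G - H))"
    using assms fin
    by (subst sum.mono_neutral_right[where S = "{G\<in>Pow H'. H \<subseteq> G}"])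
       (auto simp: prim_idem_def intro!: sum.cong)
  also have "\<dots> = (\<Sum>D\<in>Pow (H' - H). (-1) ^ card D)"
    by (rule sum.reindex_bij_witness[where i = "\<lambda>D. D \<union> H" and j = "\<lambda>G. G - H"])
       (use True in auto)
  also have "\<dots> = (if H' = H then 1 else 0)"
    using True fin sum_Pow_alternating[of "H' - H"] by auto
  finally show ?thesis .
qed

definition idem_lift :: "nat \<Rightarrow> nat set \<Rightarrow> (nat \<Rightarrow> 'f) \<Rightarrow> nat \<Rightarrow> nat set \<Rightarrow> 'f::field" where
  "idem_lift k H c = (\<lambda>i G. c i * prim_idem k H G)"

lemma psi_idem_lift:
  assumes "bij_betw Hs {1..2^k} (Pow {1..k})" "j \<in> {1..2^k}" "l \<in> {1..2^k}"
  shows "psi Hs (idem_lift k (Hs j) c i) l = (if l = j then c i else 0)"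
proof -
  have "Hs l \<subseteq> {1..k}" using assms(1,3) bij_betwE by blast
  then have "psi Hs (idem_lift k (Hs j) c i) l = c i * (if Hs l = Hs j then 1 else 0)"
    unfolding psi_def idem_lift_def by (simp add: sum_distrib_left[symmetric] sum_Pow_prim_idem)
  also have "(Hs l = Hs j) = (l = j)"
    using assms bij_betw_imp_inj_on inj_on_eq_iff by metis
  finally show ?thesis by simp
qed

lemma support_idem_lift:
  assumes "H \<subseteq> {1..k}"
  shows "{i. idem_lift k H c i \<noteq> (\<lambda>_. 0)} = {i. c i \<noteq> 0}"
  using assms prim_idem_self[of H k, where 'a = 'a]
  unfolding idem_lift_def by (auto dest: fun_cong[where x = H])

lemma idem_lift_in_psibar_inv:
  assumes "bij_betw Hs {1..2^k} (Pow {1..k})" "\<forall>l\<in>{1..2^k}. lin_code_F n (Cs l)"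
    and "j \<in> {1..2^k}" "c \<in> Cs j"
  shows "idem_lift k (Hs j) c \<in> psibar_inv k n Hs Cs"
proof -
  have "c \<in> Fvecs n" using assms(2-4) unfolding lin_code_F_def by auto
  then have "idem_lift k (Hs j) c \<in> Bvecs k n"
    using prim_idem_Bk[of k "Hs j"] unfolding Bvecs_def Fvecs_def Bk_def idem_lift_def by auto
  moreover have "(\<lambda>i. psi Hs (idem_lift k (Hs j) c i) l) \<in> Cs l" if "l \<in> {1..2^k}" for l
    using assms that by (cases "l = j") (simp_all add: psi_idem_lift lin_code_F_def)
  ultimately show ?thesis unfolding psibar_inv_def by blast
qed

lemma dH_B_psibar_inv_le:
  assumes "bij_betw Hs {1..2^k} (Pow {1..k})" "\<forall>l\<in>{1..2^k}. lin_code_F n (Cs l)"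
    and "j \<in> {1..2^k}"
  shows "dH_B (psibar_inv k n Hs Cs) \<le> dH_F (Cs j)"
  unfolding dH_F_def
proof (rule INF_greatest)
  fix c assume c: "c \<in> Cs j - {\<lambda>_. 0}"
  have "Hs j \<subseteq> {1..k}" using assms(1,3) bij_betwE by blast
  then have supp: "{i. idem_lift k (Hs j) c i \<noteq> (\<lambda>_. 0)} = {i. c i \<noteq> 0}"
    by (rule support_idem_lift)
  then have "idem_lift k (Hs j) c \<noteq> (\<lambda>_ _. 0)" using c by fastforce
  then have "dH_B (psibar_inv k n Hs Cs) \<le> enat (wtB (idem_lift k (Hs j) c))"
    unfolding dH_B_def using assms c by (intro INF_lower) (auto intro: idem_lift_in_psibar_inv)
  also have "wtB (idem_lift k (Hs j) c) = wtF c" unfolding wtB_def wtF_def supp ..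
  finally show "dH_B (psibar_inv k n Hs Cs) \<le> enat (wtF c)" .
qed

lemma Bk_nonzero_partial_sum:
  assumes "a \<in> Bk k" "a \<noteq> (\<lambda>_. 0)"
  obtains H where "H \<subseteq> {1..k}" "(\<Sum>G\<in>Pow H. a G) \<noteq> 0"
proof -
  let ?S = "{H. a H \<noteq> 0}"
  have S: "?S \<subseteq> Pow {1..k}" using assms(1) unfolding Bk_def by auto
  then have "finite ?S" using finite_subset by blast
  moreover have "?S \<noteq> {}" using assms(2) by auto
  ultimately obtain H where H: "H \<in> ?S" "\<forall>G\<in>?S. G \<subseteq> H \<longrightarrow> H = G"
    using finite_has_minimal by blast
  have "finite H" using H(1) S finite_subset by blast
  then have "(\<Sum>G\<in>Pow H. a G) = a H + (\<Sum>G\<in>Pow H - {H}. a G)"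
    by (simp add: sum.remove)
  also have "(\<Sum>G\<in>Pow H - {H}. a G) = 0"
    using H by (intro sum.neutral) auto
  finally show ?thesis using that H(1) S by auto
qed

lemma wtF_psi_le_wtB:
  assumes "x \<in> Bvecs k n"
  shows "wtF (\<lambda>i. psi Hs (x i) j) \<le> wtB x"
proof -
  have "{i. x i \<noteq> (\<lambda>_. 0)} \<subseteq> {..<n}" using assms unfolding Bvecs_def by (auto simp: not_less)
  then have "finite {i. x i \<noteq> (\<lambda>_. 0)}" using finite_subset by blast
  moreover have "{i. psi Hs (x i) j \<noteq> 0} \<subseteq> {i. x i \<noteq> (\<lambda>_. 0)}" unfolding psi_def by auto
  ultimately show ?thesis unfolding wtF_def wtB_def by (rule card_mono)
qed

lemma INF_dH_F_le_dH_B_psibar_inv: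
  assumes "bij_betw Hs {1..2^k} (Pow {1..k})"
  shows "(INF j\<in>{1..2^k}. dH_F (Cs j)) \<le> dH_B (psibar_inv k n Hs Cs)"
  unfolding dH_B_def
proof (rule INF_greatest)
  fix x assume x: "x \<in> psibar_inv k n Hs Cs - {\<lambda>_ _. 0}"
  then have xB: "x \<in> Bvecs k n" and xC: "\<forall>j\<in>{1..2^k}. (\<lambda>i. psi Hs (x i) j) \<in> Cs j"
    unfolding psibar_inv_def by auto
  obtain i where i: "x i \<noteq> (\<lambda>_. 0)" using x by auto
  have "x i \<in> Bk k" using xB unfolding Bvecs_def by auto
  then obtain H where H: "H \<subseteq> {1..k}" "(\<Sum>G\<in>Pow H. x i G) \<noteq> 0"
    using i by (rule Bk_nonzero_partial_sum)
  then obtain j where "j \<in> {1..2^k}" "Hs j = H"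
    using assms unfolding bij_betw_def by (metis PowI imageE)
  with H have j: "j \<in> {1..2^k}" "psi Hs (x i) j \<noteq> 0"
    unfolding psi_def by auto
  then have "(\<lambda>i. psi Hs (x i) j) \<in> Cs j - {\<lambda>_. 0}" using xC by (auto dest: fun_cong[where x = i])
  then have "dH_F (Cs j) \<le> enat (wtF (\<lambda>i. psi Hs (x i) j))" unfolding dH_F_def by (rule INF_lower)
  also have "\<dots> \<le> enat (wtB x)" using xB by (simp add: wtF_psi_le_wtB)
  finally show "(INF j\<in>{1..2^k}. dH_F (Cs j)) \<le> enat (wtB x)"
    using j(1) by (meson INF_lower order_trans)
qed

theorem lemma5p5:
  fixes p r k n :: nat
    and Hs :: "nat \<Rightarrow> nat set"
    and C :: "(nat \<Rightarrow> nat set \<Rightarrow> 'f::{field,finite}) set"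
    and Cs :: "nat \<Rightarrow> (nat \<Rightarrow> 'f) set"
  assumes "prime p" and "r \<ge> 1" and "card (UNIV :: 'f set) = p ^ r"
    and "k \<ge> 1"
    and "bij_betw Hs {1..2^k} (Pow {1..k})"
    and "lin_code_B k n C"
    and "\<forall>j\<in>{1..2^k}. lin_code_F n (Cs j)"
    and "C = psibar_inv k n Hs Cs"
  shows "dH_B C = (INF j\<in>{1..2^k}. dH_F (Cs j))"
proof (rule antisym)
  show "dH_B C \<le> (INF j\<in>{1..2^k}. dH_F (Cs j))"
    using assms(5,7,8) dH_B_psibar_inv_le by (metis INF_greatest)
  show "(INF j\<in>{1..2^k}. dH_F (Cs j)) \<le> dH_B C"
    unfolding assms(8) by (rule INF_dH_F_le_dH_B_psibar_inv[OF assms(5)])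
qed

end
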